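(* Let $\phi:\mathbb{M}_n\to\mathbb{M}_m$ be a positive linear map with Hilbert–Schmidt adjoint $\phi^*:\mathbb{M}_m\to\mathbb{M}_n$. Suppose that either \[ \mathrm{Tr}[\phi^*(K^*X^{+}K)] \geq \mathrm{Tr}[\phi^*(K)^*\phi^*(X)^{+}\phi^*(K)] \] holds for every $(K,X)\in\mathbb{M}_m\times\mathbb{M}_m^+$ with $\ker(X)\subseteq\ker(K^* )$, or \[ \mathrm{Tr}[K^*X^{+}K] \geq \mathrm{Tr}[\phi^*(K)^*\phi^*(X)^{+}\phi^*(K)] \] holds for every $(K,X)\in\mathbb{M}_m\times\mathbb{M}_m^+$ with $\ker(X)\subseteq\ker(K^* )$. Then $\ker(\phi^*(X))\subseteq\ker(\phi^*(K)^* )$ for every $(K,X)\in\mathbb{M}_m\times\mathbb{M}_m^+$ with $\ker(X)\subseteq\ker(K^* )$.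
   Context: $\mathbb{M}_n$ denotes the $n\times n$ complex matrices and $\mathbb{M}_n^+$ the positive semidefinite ones; $Z^+$ denotes the Moore–Penrose generalized inverse; the adjoint is with respect to $\langle A,B\rangle=\mathrm{Tr}[A^*B]$. A positive map sends positive semidefinite matrices to positive semidefinite matrices. *)

theory Defs
  imports "HOL-Analysis.Analysis" "HOL-Library.Complex_Order"
begin

definition cadj :: "complex^'n^'m \<Rightarrow> complex^'m^'n" where
  "cadj A = (\<chi> i j. cnj (A $ j $ i))"

definition cscale :: "complex \<Rightarrow> complex^'n^'m \<Rightarrow> complex^'n^'m" where
  "cscale c A = (\<chi> i j. c * A $ i $ j)"

definition ker :: "complex^'n^'m \<Rightarrow> (complex^'n) set" where
  "ker A = {x. A *v x = 0}"

definition psd :: "complex^'n^'n \<Rightarrow> bool" where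
  "psd A \<longleftrightarrow> cadj A = A \<and> (\<forall>x::complex^'n. (\<Sum>i\<in>UNIV. cnj (x $ i) * (A *v x) $ i) \<ge> 0)"

definition clinear_map :: "(complex^'n^'n \<Rightarrow> complex^'m^'m) \<Rightarrow> bool" where
  "clinear_map f \<longleftrightarrow> (\<forall>A B. f (A + B) = f A + f B) \<and> (\<forall>c A. f (cscale c A) = cscale c (f A))"

definition positive_map :: "(complex^'n^'n \<Rightarrow> complex^'m^'m) \<Rightarrow> bool" where
  "positive_map f \<longleftrightarrow> (\<forall>A. psd A \<longrightarrow> psd (f A))"

text \<open>Moore--Penrose generalized inverse: the unique matrix satisfying the Penrose equations.\<close>
definition mp_inv :: "complex^'n^'n \<Rightarrow> complex^'n^'n" where
  "mp_inv A = (THE B. A ** B ** A = A \<and> B ** A ** B = B \<and>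
                     cadj (A ** B) = A ** B \<and> cadj (B ** A) = B ** A)"

end

theory Submission
  imports Defs
begin

(*
  Regularize X to X_e = X + e P, where P = I - X X^+ is the orthogonal projection onto
  ker X. For e > 0 the matrix X_e is positive definite, and ker X <= ker K^* gives P K = 0,
  hence K^* X_e^+ K = K^* X^+ K. Either hypothesis, applied to the pair K, X_e, therefore
  bounds Tr[phi^*(K)^* phi^*(X_e)^+ phi^*(K)] uniformly in e > 0.

  Since X_e dominates a positive multiple of every rank-one matrix y y^* and phi^* is
  positive, the kernel of phi^*(X_e) lies in the kernel of phi^* applied to each y y^*, and
  by polarization in ker phi^*(M)^* for every M. The Cauchy-Schwarz inequality for the form
  of A = phi^*(X_e) then gives
    |phi^*(K)^* v|^2 <= <v, A v> Tr[phi^*(K)^* A^+ phi^*(K)].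
  For v in ker phi^*(X) we have <v, A v> = e <v, phi^*(P) v>, and letting e -> 0 yields
  phi^*(K)^* v = 0.
*)

lemma quadratic_nonneg_imp_discriminant:
  fixes a b k :: real
  assumes nonneg: "\<And>t. 0 \<le> a - 2 * t * k + t\<^sup>2 * k * b" and "0 \<le> k" "0 \<le> b"
  shows "k \<le> a * b"
proof (cases "b = 0")
  case True
  show ?thesis
  proof (rule ccontr)
    assume "\<not> k \<le> a * b"
    then have "k > 0"
      using True by simp
    moreover have "0 \<le> a - 2 * ((a + 1) / (2 * k)) * k"
      using nonneg[of "(a + 1) / (2 * k)"] True by simp
    ultimately show False
      by (simp add: field_simps)
  qed
next
  case False
  then have "b > 0"
    using \<open>0 \<le> b\<close> by simp
  moreover have "0 \<le> a - 2 * (1 / b) * k + (1 / b)\<^sup>2 * k * b"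
    by (rule nonneg)
  ultimately show ?thesis
    by (simp add: field_simps power2_eq_square)
qed

lemma nonpos_if_le_all_pos_mult:
  fixes x C :: real
  assumes "\<And>e. 0 < e \<Longrightarrow> x \<le> e * C"
  shows "x \<le> 0"
proof (rule field_le_epsilon)
  fix d :: real
  assume "0 < d"
  then have "x \<le> d / (\<bar>C\<bar> + 1) * C"
    by (intro assms) simp
  also have "\<dots> \<le> d / (\<bar>C\<bar> + 1) * (\<bar>C\<bar> + 1)"
    using \<open>0 < d\<close> by (intro mult_left_mono) auto
  also have "\<dots> = d"
    by simp
  finally show "x \<le> 0 + d"
    by simp
qed

section \<open>Complex inner product, adjoints and rank-one matrices\<close>

definition cinner :: "complex^'n \<Rightarrow> complex^'n \<Rightarrow> complex" where
  "cinner x y = (\<Sum>i\<in>UNIV. cnj (x $ i) * y $ i)"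

definition outer :: "complex^'n \<Rightarrow> complex^'n \<Rightarrow> complex^'n^'n" where
  "outer x y = (\<chi> i j. x $ i * cnj (y $ j))"

lemma cadj_cadj [simp]: "cadj (cadj A) = A"
  by (simp add: cadj_def vec_eq_iff)

lemma cadj_mult: "cadj (A ** B) = cadj B ** cadj A"
  by (simp add: cadj_def vec_eq_iff matrix_matrix_mult_def mult.commute)

lemma cadj_add: "cadj (A + B) = cadj A + cadj B"
  by (simp add: cadj_def vec_eq_iff)

lemma cadj_diff: "cadj (A - B) = cadj A - cadj B"
  by (simp add: cadj_def vec_eq_iff)

lemma cadj_scaleR: "cadj (r *\<^sub>R A) = r *\<^sub>R cadj A"
  by (simp add: cadj_def vec_eq_iff)

lemma cadj_cscale: "cadj (cscale c A) = cscale (cnj c) (cadj A)"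
  by (simp add: cadj_def cscale_def vec_eq_iff)

lemma cadj_mat [simp]: "cadj (mat 1) = mat 1"
  by (simp add: cadj_def mat_def vec_eq_iff)

lemma cadj_zero [simp]: "cadj 0 = 0"
  by (simp add: cadj_def vec_eq_iff)

lemma cadj_eq_0_iff [simp]: "cadj A = 0 \<longleftrightarrow> A = 0"
  by (metis cadj_cadj cadj_zero)

lemma matrix_add_rdistrib: "((A::'a::semiring_1^'n^'m) + B) ** C = A ** C + B ** C"
  by (simp add: matrix_matrix_mult_def vec_eq_iff sum.distrib distrib_right)

lemma matrix_diff_rdistrib: "((A::'a::ring_1^'n^'m) - B) ** C = A ** C - B ** C"
  by (simp add: matrix_matrix_mult_def vec_eq_iff sum_subtractf left_diff_distrib)

lemma matrix_diff_ldistrib: "(C::'a::ring_1^'n^'m) ** (A - B) = C ** A - C ** B"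
  by (simp add: matrix_matrix_mult_def vec_eq_iff sum_subtractf right_diff_distrib)

lemma matrix_vector_mult_smult: "(A::'a::comm_ring_1^'n^'m) *v (c *s x) = c *s (A *v x)"
  by (simp add: matrix_vector_mult_def vec_eq_iff sum_distrib_left mult_ac)

lemma scaleR_matrix_vector_mult: "(r *\<^sub>R A) *v x = r *\<^sub>R ((A::complex^'n^'m) *v x)"
  by (simp add: matrix_vector_mult_def vec_eq_iff scaleR_sum_right)

lemma cscale_matrix_vector_mult: "cscale c A *v x = c *s ((A::complex^'n^'m) *v x)"
  by (simp add: cscale_def matrix_vector_mult_def vec_eq_iff sum_distrib_left mult.assoc)

lemma cscale_matrix_mult: "cscale c A ** B = cscale c ((A::complex^'n^'m) ** B)"
  by (simp add: cscale_def matrix_matrix_mult_def vec_eq_iff sum_distrib_left mult.assoc)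

lemma trace_cscale: "trace (cscale c A) = c * trace A"
  by (simp add: cscale_def trace_def sum_distrib_left)

lemma trace_scaleR: "trace (r *\<^sub>R (A::complex^'n^'n)) = r *\<^sub>R trace A"
  by (simp add: trace_def scaleR_sum_right)

lemma column_component: "((A::'a::semiring_1^'n^'m) *v axis j 1) $ i = A $ i $ j"
  by (simp add: matrix_vector_mult_def axis_def if_distrib cong: if_cong)

lemma matrix_eq_columns: "(\<And>j. A *v axis j 1 = B *v axis j 1) \<Longrightarrow> A = (B::'a::semiring_1^'n^'m)"
  by (simp add: vec_eq_iff flip: column_component)

lemma cinner_add_left: "cinner (x + y) z = cinner x z + cinner y z"
  by (simp add: cinner_def algebra_simps sum.distrib)

lemma cinner_add_right: "cinner x (y + z) = cinner x y + cinner x z"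
  by (simp add: cinner_def algebra_simps sum.distrib)

lemma cinner_diff_left: "cinner (x - y) z = cinner x z - cinner y z"
  by (simp add: cinner_def algebra_simps sum_subtractf)

lemma cinner_diff_right: "cinner x (y - z) = cinner x y - cinner x z"
  by (simp add: cinner_def algebra_simps sum_subtractf)

lemma cinner_smult_left: "cinner (c *s x) y = cnj c * cinner x y"
  by (simp add: cinner_def sum_distrib_left mult_ac)

lemma cinner_smult_right: "cinner x (c *s y) = c * cinner x y"
  by (simp add: cinner_def sum_distrib_left mult_ac)

lemma cinner_scaleR_right: "cinner x (r *\<^sub>R y) = of_real r * cinner x y"
proof -
  have "cnj (x $ i) * (r *\<^sub>R y) $ i = of_real r * (cnj (x $ i) * y $ i)" for i
    unfolding vector_scaleR_component by (simp add: scaleR_conv_of_real)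
  then show ?thesis
    by (simp add: cinner_def sum_distrib_left)
qed

lemma cinner_zero_right [simp]: "cinner x 0 = 0"
  by (simp add: cinner_def)

lemma cinner_axis_left: "cinner (axis i 1) x = x $ i"
proof -
  have "cnj (axis i 1 $ k) * x $ k = (if k = i then x $ k else 0)" for k
    by (simp add: axis_def)
  then show ?thesis
    by (simp add: cinner_def)
qed

lemma cnj_cinner: "cnj (cinner x y) = cinner y x"
  by (simp add: cinner_def mult.commute)

lemma cinner_cadj_left: "cinner (cadj A *v x) y = cinner x (A *v y)"
  unfolding cinner_def matrix_vector_mult_def cadj_def
  by (simp add: sum_distrib_left sum_distrib_right mult_ac) (rule sum.swap)

lemma cinner_cadj_right: "cinner x (cadj A *v y) = cinner (A *v x) y"
  by (metis cadj_cadj cinner_cadj_left)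

lemma cinner_matrix_axis: "cinner (axis i 1) (M *v axis j 1) = M $ i $ j"
  by (simp add: cinner_axis_left column_component)

lemma Re_cinner: "Re (cinner x y) = inner x y"
  by (simp add: cinner_def inner_vec_def inner_complex_def Re_sum)

lemma cinner_self: "cinner x x = of_real ((norm x)\<^sup>2)"
proof -
  have "Im (cinner x x) = 0"
    by (simp add: cinner_def Im_sum)
  then show ?thesis
    by (simp add: complex_eq_iff Re_cinner power2_norm_eq_inner)
qed

lemma cinner_self_eq_0_iff [simp]: "cinner x x = 0 \<longleftrightarrow> x = 0"
  by (simp add: cinner_self)

lemma power2_norm_vec: "(norm x)\<^sup>2 = (\<Sum>i\<in>UNIV. (norm (x $ i))\<^sup>2)"
  by (simp add: norm_vec_def L2_set_def sum_nonneg)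

lemma outer_mult_vector: "outer x y *v z = cinner y z *s x"
  by (simp add: outer_def cinner_def matrix_vector_mult_def vec_eq_iff sum_distrib_left mult_ac)

lemma cinner_outer_self: "cinner x (outer y y *v x) = of_real ((cmod (cinner y x))\<^sup>2)"
proof -
  have "cinner x y = cnj (cinner y x)"
    by (simp add: cnj_cinner)
  then show ?thesis
    by (simp add: outer_mult_vector cinner_smult_right complex_mult_cnj cmod_power2)
qed

lemma outer_scaleR: "outer (r *\<^sub>R x) (r *\<^sub>R x) = (r * r) *\<^sub>R outer x x"
  by (simp add: outer_def vec_eq_iff)

lemma trace_mult_outer: "trace (M ** outer x y) = cinner y (M *v x)"
  by (simp add: trace_def outer_def cinner_def matrix_matrix_mult_def matrix_vector_mult_def
      sum_distrib_left mult_ac)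

lemma trace_cadj_mult_cancel:
  assumes "\<And>B. trace (cadj M ** B) = trace (cadj N ** B)"
  shows "M = (N::complex^'n^'n)"
proof -
  have "M $ i $ j = N $ i $ j" for i j
  proof -
    have "cinner (M *v axis j 1) (axis i 1) = cinner (N *v axis j 1) (axis i 1)"
      using assms[of "outer (axis i 1) (axis j 1)"] by (simp add: trace_mult_outer cinner_cadj_right)
    then show ?thesis
      by (metis cnj_cinner cinner_matrix_axis)
  qed
  then show ?thesis
    by (simp add: vec_eq_iff)
qed

lemma trace_sandwich:
  "trace (cadj B ** M ** B) = (\<Sum>j\<in>UNIV. cinner (B *v axis j 1) (M *v (B *v axis j 1)))"
proof -
  have "(cadj B ** M ** B) $ j $ j = cinner (B *v axis j 1) (M *v (B *v axis j 1))" for j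
    by (simp add: cinner_cadj_right flip: cinner_matrix_axis matrix_vector_mul_assoc)
  then show ?thesis
    by (simp add: trace_def)
qed

lemma outer_polarization:
  "cscale 4 (outer x y) = outer (x + y) (x + y) + cscale \<i> (outer (x + \<i> *s y) (x + \<i> *s y))
     + cscale (-1) (outer (x - y) (x - y)) + cscale (-\<i>) (outer (x - \<i> *s y) (x - \<i> *s y))"
  by (auto simp: vec_eq_iff outer_def cscale_def complex_eq_iff algebra_simps)

lemma matrix_sum_outer_columns: "M = (\<Sum>l\<in>UNIV. outer (M *v axis l 1) (axis l 1))"
proof -
  have "outer (M *v axis l 1) (axis l 1) $ i $ j = (if l = j then M $ i $ j else 0)" for i j l
    by (simp add: outer_def column_component) (simp add: axis_def)
  then show ?thesis
    by (simp add: vec_eq_iff sum_component)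
qed

lemma outer_squares_generate:
  assumes add: "\<And>A B. A \<in> S \<Longrightarrow> B \<in> S \<Longrightarrow> A + B \<in> S"
    and scale: "\<And>c A. A \<in> S \<Longrightarrow> cscale c A \<in> S"
    and outer: "\<And>y. outer y y \<in> S"
  shows "M \<in> S"
proof -
  have outer_xy: "outer x y \<in> S" for x y
  proof -
    have "cscale 4 (outer x y) \<in> S"
      unfolding outer_polarization by (intro add scale outer)
    then have "cscale (1 / 4) (cscale 4 (outer x y)) \<in> S"
      by (rule scale)
    then show ?thesis
      by (simp add: cscale_def vec_eq_iff)
  qed
  have zero: "0 \<in> S"
    using scale[OF outer, of 0 0] by (simp add: cscale_def vec_eq_iff zero_vec_def)
  have "(\<Sum>l\<in>F. outer (M *v axis l 1) (axis l 1)) \<in> S" if "finite F" for F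
    using that by (induction rule: finite_induct) (simp_all add: zero add outer_xy)
  then show ?thesis
    by (subst matrix_sum_outer_columns) simp
qed

section \<open>Positive semidefinite matrices\<close>

lemma quadratic_form_eq_0_imp_zero:
  assumes form: "\<And>x. cinner x (M *v x) = 0"
  shows "M = 0"
proof -
  have expand: "cinner (axis i 1 + c *s axis j 1) (M *v (axis i 1 + c *s axis j 1))
      = M$i$i + c * M$i$j + cnj c * M$j$i + cnj c * c * M$j$j" for i j c
    by (simp add: matrix_vector_right_distrib matrix_vector_mult_smult cinner_add_left
        cinner_add_right cinner_smult_left cinner_smult_right cinner_matrix_axis algebra_simps)
  have "M $ i $ j = 0" for i j
  proof -
    have diag: "M $ k $ k = 0" for k
      using form[of "axis k 1"] by (simp add: cinner_matrix_axis)
    have "M$i$j + M$j$i = 0"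
      using form[of "axis i 1 + 1 *s axis j 1", unfolded expand] by (simp add: diag)
    moreover have "\<i> * M$i$j - \<i> * M$j$i = 0"
      using form[of "axis i 1 + \<i> *s axis j 1", unfolded expand] by (simp add: diag)
    ultimately show ?thesis
      by (simp add: right_diff_distrib[symmetric] add_eq_0_iff)
  qed
  then show ?thesis
    by (simp add: vec_eq_iff)
qed

lemma psd_iff_cinner: "psd A \<longleftrightarrow> cadj A = A \<and> (\<forall>x. 0 \<le> cinner x (A *v x))"
  by (simp add: psd_def cinner_def)

lemma psd_iff_form_nonneg: "psd A \<longleftrightarrow> (\<forall>x. 0 \<le> cinner x (A *v x))"
proof (intro iffI)
  assume nonneg: "\<forall>x. 0 \<le> cinner x (A *v x)"
  have "cinner x ((cadj A - A) *v x) = 0" for x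
  proof -
    have "cinner x (A *v x) \<in> \<real>"
      using nonneg nonnegative_complex_is_real by blast
    then have "cinner x (cadj A *v x) = cinner x (A *v x)"
      by (metis Reals_cnj_iff cinner_cadj_right cnj_cinner)
    then show ?thesis
      by (simp add: matrix_vector_mult_diff_rdistrib cinner_diff_right)
  qed
  then have "cadj A - A = 0"
    by (rule quadratic_form_eq_0_imp_zero)
  with nonneg show "psd A"
    by (simp add: psd_iff_cinner)
qed (simp add: psd_iff_cinner)

lemma psdI: "(\<And>x. 0 \<le> cinner x (A *v x)) \<Longrightarrow> psd A"
  by (simp add: psd_iff_form_nonneg)

lemma psd_form_nonneg: "psd A \<Longrightarrow> 0 \<le> cinner x (A *v x)"
  by (simp add: psd_iff_form_nonneg)

lemma psd_hermitian: "psd A \<Longrightarrow> cadj A = A"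
  by (simp add: psd_iff_cinner)

lemma psd_form_eq_Re: "psd A \<Longrightarrow> cinner x (A *v x) = of_real (Re (cinner x (A *v x)))"
  using psd_form_nonneg[of A x] by (simp add: less_eq_complex_def complex_eq_iff)

lemma psd_outer: "psd (outer y y)"
  by (rule psdI) (simp add: cinner_outer_self less_eq_complex_def)

lemma psd_add: "psd A \<Longrightarrow> psd B \<Longrightarrow> psd (A + B)"
  by (simp add: psd_iff_form_nonneg matrix_vector_mult_add_rdistrib cinner_add_right)

lemma psd_scaleR: "0 \<le> r \<Longrightarrow> psd A \<Longrightarrow> psd (r *\<^sub>R A)"
  by (simp add: psd_iff_form_nonneg scaleR_matrix_vector_mult cinner_scaleR_right
      scaleR_nonneg_nonneg flip: scaleR_conv_of_real)

lemma psd_cauchy_schwarz: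
  assumes "psd A"
  shows "(cmod (cinner x (A *v y)))\<^sup>2 \<le> Re (cinner x (A *v x)) * Re (cinner y (A *v y))"
proof -
  define c where "c = cinner x (A *v y)"
  have yx: "cinner y (A *v x) = cnj c"
    unfolding c_def using psd_hermitian[OF assms] by (metis cinner_cadj_right cnj_cinner)
  have "0 \<le> Re (cinner x (A *v x)) - 2 * t * (cmod c)\<^sup>2
      + t\<^sup>2 * (cmod c)\<^sup>2 * Re (cinner y (A *v y))" for t :: real
  proof -
    define w where "w = x - (of_real t * cnj c) *s y"
    have "cinner w (A *v w) = cinner x (A *v x) - 2 * of_real t * (c * cnj c)
        + (of_real t)\<^sup>2 * (c * cnj c) * cinner y (A *v y)"
      by (simp add: w_def matrix_vector_mult_diff_distrib matrix_vector_mult_smult cinner_diff_left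
          cinner_diff_right cinner_smult_left cinner_smult_right yx flip: c_def)
        (simp add: algebra_simps power2_eq_square)
    also have "c * cnj c = of_real ((cmod c)\<^sup>2)"
      by (rule complex_norm_square[symmetric])
    finally have "Re (cinner w (A *v w))
        = Re (cinner x (A *v x)) - 2 * t * (cmod c)\<^sup>2
          + t\<^sup>2 * (cmod c)\<^sup>2 * Re (cinner y (A *v y))"
      by (simp del: of_real_power add: of_real_power[symmetric])
    moreover have "0 \<le> Re (cinner w (A *v w))"
      using psd_form_nonneg[OF assms] by (simp add: less_eq_complex_def)
    ultimately show ?thesis
      by simp
  qed
  moreover have "0 \<le> Re (cinner x (A *v x))" "0 \<le> Re (cinner y (A *v y))"
    using psd_form_nonneg[OF assms] by (simp_all add: less_eq_complex_def)
  ultimately show ?thesis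
    unfolding c_def by (intro quadratic_nonneg_imp_discriminant) auto
qed

lemma psd_form_eq_0_imp_kernel:
  assumes "psd A" "cinner x (A *v x) = 0"
  shows "A *v x = 0"
proof -
  have "(cmod (cinner (A *v x) (A *v x)))\<^sup>2
      \<le> Re (cinner (A *v x) (A *v (A *v x))) * Re (cinner x (A *v x))"
    by (rule psd_cauchy_schwarz[OF assms(1)])
  then show ?thesis
    using assms(2) by simp
qed

lemma psd_add_kernel:
  assumes "psd A" "psd B" "(A + B) *v x = 0"
  shows "A *v x = 0"
proof (rule psd_form_eq_0_imp_kernel[OF assms(1)])
  have "cinner x (A *v x) + cinner x (B *v x) = 0"
    using assms(3) by (simp add: matrix_vector_mult_add_rdistrib flip: cinner_add_right)
  then show "cinner x (A *v x) = 0"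
    using psd_form_nonneg[OF assms(1)] psd_form_nonneg[OF assms(2)] by (simp add: add_nonneg_eq_0_iff)
qed

lemma psd_diff_outer:
  assumes Z: "psd Z" and "0 \<le> c" and c: "c * Re (cinner u (Z *v u)) \<le> 1"
  shows "psd (Z - c *\<^sub>R outer (Z *v u) (Z *v u))"
proof (rule psdI)
  fix x
  have "(cmod (cinner (Z *v u) x))\<^sup>2 \<le> Re (cinner u (Z *v u)) * Re (cinner x (Z *v x))"
    using psd_cauchy_schwarz[OF Z, of u x] psd_hermitian[OF Z] by (metis cinner_cadj_left)
  also have "c * \<dots> \<le> Re (cinner x (Z *v x))"
    using mult_right_mono[OF c, of "Re (cinner x (Z *v x))"] psd_form_nonneg[OF Z, of x]
    by (simp add: less_eq_complex_def mult.assoc)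
  finally have "c * (cmod (cinner (Z *v u) x))\<^sup>2 \<le> Re (cinner x (Z *v x))"
    using \<open>0 \<le> c\<close> by (simp add: mult_left_mono)
  then show "0 \<le> cinner x ((Z - c *\<^sub>R outer (Z *v u) (Z *v u)) *v x)"
    using psd_form_nonneg[OF Z, of x]
    by (simp add: matrix_vector_mult_diff_rdistrib scaleR_matrix_vector_mult cinner_diff_right
        cinner_scaleR_right cinner_outer_self less_eq_complex_def)
qed

lemma psd_split_outer_column:
  assumes Y: "psd Y" and j: "Y *v axis j 1 \<noteq> 0"
  obtains y where "psd (Y - outer y y)" "(Y - outer y y) *v axis j 1 = 0"
proof -
  define c where "c = Y *v axis j 1"
  define d where "d = Re (Y $ j $ j)"
  have Yjj: "Y $ j $ j = of_real d"
    using psd_form_eq_Re[OF Y, of "axis j 1"] by (simp add: cinner_matrix_axis d_def)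
  have "d \<noteq> 0"
    using j psd_form_eq_0_imp_kernel[OF Y, of "axis j 1"] by (auto simp: cinner_matrix_axis Yjj)
  moreover have "0 \<le> d"
    using psd_form_nonneg[OF Y, of "axis j 1"] by (simp add: cinner_matrix_axis Yjj less_eq_complex_def)
  ultimately have "0 < d"
    by simp
  define y where "y = (1 / sqrt d) *\<^sub>R c"
  have outer_y: "outer y y = (1 / d) *\<^sub>R outer c c"
    using \<open>0 < d\<close> by (simp add: y_def outer_scaleR real_sqrt_mult[symmetric])
  have "psd (Y - outer y y)"
    unfolding outer_y c_def
    by (rule psd_diff_outer[OF Y]) (use \<open>0 < d\<close> in \<open>simp_all add: cinner_matrix_axis Yjj\<close>)
  moreover have "cinner c (axis j 1) = of_real d"
    by (metis Yjj c_def cinner_matrix_axis cnj_cinner complex_cnj_complex_of_real)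
  then have "(Y - outer y y) *v axis j 1 = 0"
    using \<open>0 < d\<close>
    by (simp add: outer_y matrix_vector_mult_diff_rdistrib scaleR_matrix_vector_mult
        outer_mult_vector flip: c_def) (simp add: vec_eq_iff, simp add: scaleR_conv_of_real)
  ultimately show thesis
    by (rule that)
qed

lemma psd_sum_outer:
  assumes "psd Y"
  shows "\<exists>ys. Y = (\<Sum>y\<leftarrow>ys. outer y y)"
  using assms
proof (induction "card {l. Y *v axis l 1 \<noteq> 0}" arbitrary: Y rule: less_induct)
  case less
  show ?case
  proof (cases "\<exists>j. Y *v axis j 1 \<noteq> 0")
    case False
    then have "Y = 0"
      by (intro matrix_eq_columns) simp
    then show ?thesis
      by (intro exI[of _ "[]"]) simp
  next
    case True
    then obtain j where j: "Y *v axis j 1 \<noteq> 0"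
      by blast
    then obtain y where psd': "psd (Y - outer y y)" and j': "(Y - outer y y) *v axis j 1 = 0"
      using psd_split_outer_column[OF less.prems] by blast
    have "{l. (Y - outer y y) *v axis l 1 \<noteq> 0} \<subset> {l. Y *v axis l 1 \<noteq> 0}"
      using psd_add_kernel[OF psd' psd_outer[of y]] j j' by auto
    then obtain ys where "Y - outer y y = (\<Sum>y\<leftarrow>ys. outer y y)"
      using less.hyps[OF psubset_card_mono psd'] by auto
    then have "Y = (\<Sum>y\<leftarrow>y # ys. outer y y)"
      by (simp add: algebra_simps)
    then show ?thesis
      by blast
  qed
qed

lemma trace_mult_psd_nonneg:
  assumes "psd Y" "psd N"
  shows "0 \<le> trace (Y ** N)"
proof -
  have "0 \<le> trace ((\<Sum>y\<leftarrow>ys. outer y y) ** N)" for ys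
  proof (induction ys)
    case (Cons y ys)
    have "trace (outer y y ** N) = cinner y (N *v y)"
      by (metis trace_mul_sym trace_mult_outer)
    with Cons psd_form_nonneg[OF assms(2), of y] show ?case
      by (simp add: matrix_add_rdistrib trace_add)
  qed (simp add: trace_def)
  with psd_sum_outer[OF assms(1)] show ?thesis
    by blast
qed

section \<open>The Moore--Penrose inverse of a Hermitian matrix\<close>

definition is_mp_inverse :: "complex^'n^'n \<Rightarrow> complex^'n^'n \<Rightarrow> bool" where
  "is_mp_inverse A B \<longleftrightarrow> A ** B ** A = A \<and> B ** A ** B = B \<and>
     cadj (A ** B) = A ** B \<and> cadj (B ** A) = B ** A"

lemma is_mp_inverse_unique:
  assumes "is_mp_inverse A B" "is_mp_inverse A C"
  shows "B = C"
proof -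
  have B: "A ** B ** A = A" "B ** A ** B = B" "cadj (A ** B) = A ** B" "cadj (B ** A) = B ** A"
    and C: "A ** C ** A = A" "C ** A ** C = C" "cadj (A ** C) = A ** C" "cadj (C ** A) = C ** A"
    using assms unfolding is_mp_inverse_def by auto
  have "B = B ** cadj (A ** B)"
    using B(2,3) by (simp add: matrix_mul_assoc)
  also have "\<dots> = B ** cadj (A ** C ** A ** B)"
    using C(1) by simp
  also have "\<dots> = B ** (cadj (A ** B) ** cadj (A ** C))"
    by (simp add: cadj_mult matrix_mul_assoc)
  also have "\<dots> = (B ** A ** B) ** A ** C"
    using B(3) C(3) by (simp add: matrix_mul_assoc)
  finally have BAC: "B = B ** A ** C"
    using B(2) by simp
  have "C = cadj (C ** A) ** C"
    using C(2,4) by (simp add: matrix_mul_assoc)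
  also have "\<dots> = cadj (C ** (A ** B ** A)) ** C"
    using B(1) by simp
  also have "\<dots> = (cadj (B ** A) ** cadj (C ** A)) ** C"
    by (simp add: cadj_mult matrix_mul_assoc)
  also have "\<dots> = B ** (A ** C ** A) ** C"
    using B(4) C(4) by (simp add: matrix_mul_assoc)
  finally show ?thesis
    using BAC C(1) by (simp add: matrix_mul_assoc)
qed

lemma mp_inv_eqI: "is_mp_inverse A B \<Longrightarrow> mp_inv A = B"
  unfolding mp_inv_def is_mp_inverse_def[symmetric] using is_mp_inverse_unique by blast

lemma is_mp_inverse_of_inverse:
  "A ** B = mat 1 \<Longrightarrow> B ** A = mat 1 \<Longrightarrow> is_mp_inverse A B"
  by (simp add: is_mp_inverse_def flip: matrix_mul_assoc)

lemma hermitian_range_kernel_decomp: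
  assumes herm: "cadj A = A"
  obtains u z where "x = A *v u + z" "A *v z = 0"
proof -
  have "subspace (range ((*v) A))"
    by (rule linear_subspace_image) auto
  then have span: "span (range ((*v) A)) = range ((*v) A)"
    by (rule span_eq_iff[THEN iffD2])
  obtain y z where y: "y \<in> range ((*v) A)" and x: "x = y + z"
    and orth: "\<And>w. w \<in> range ((*v) A) \<Longrightarrow> orthogonal z w"
    using orthogonal_subspace_decomp_exists[of "range ((*v) A)" x] unfolding span by blast
  have "(norm (A *v z))\<^sup>2 = Re (cinner z (A *v (A *v z)))"
    using herm by (metis Re_cinner cinner_cadj_left power2_norm_eq_inner)
  also have "\<dots> = 0"
    using orth[of "A *v (A *v z)"] by (simp add: orthogonal_def Re_cinner)
  finally have "A *v z = 0"
    by simp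
  with y x that show thesis
    by blast
qed

lemma hermitian_square_factor:
  assumes "cadj A = A"
  obtains T where "A ** A ** T = A"
proof -
  have "\<exists>u. A *v axis j 1 = A *v (A *v u)" for j
  proof -
    obtain u z where "axis j 1 = A *v u + z" "A *v z = 0"
      using hermitian_range_kernel_decomp[OF assms] .
    then show ?thesis
      by (metis add.right_neutral matrix_vector_right_distrib)
  qed
  then obtain u where u: "\<And>j. A *v axis j 1 = A *v (A *v u j)"
    by metis
  define T where "T = (\<chi> i j. u j $ i)"
  have "T *v axis j 1 = u j" for j
    by (simp add: vec_eq_iff column_component T_def)
  then have "A ** A ** T = A"
    by (intro matrix_eq_columns) (simp add: u flip: matrix_vector_mul_assoc)
  then show thesis
    by (rule that)
qed

lemma is_mp_inverse_of_square_factor: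
  assumes herm: "cadj A = A" and AAT: "A ** A ** T = A"
  shows "is_mp_inverse A (cadj T ** A ** T)"
proof -
  (* (A T)^* (A T) = T^* A A T = A T, so P = A T is a Hermitian idempotent
     with P A = A P = A. *)
  define P where "P = A ** T"
  have AP: "A ** P = A"
    using AAT by (simp add: P_def matrix_mul_assoc)
  have TA: "cadj T ** A = cadj P"
    by (simp add: P_def cadj_mult herm)
  have PA: "cadj P ** A = A"
    using arg_cong[OF AAT, of cadj] by (simp add: P_def cadj_mult herm matrix_mul_assoc)
  have PP: "cadj P ** P = P"
    using PA by (simp add: P_def matrix_mul_assoc)
  then have herm_P: "cadj P = P"
    by (metis cadj_cadj cadj_mult)
  define B where "B = cadj T ** A ** T"
  have B: "B = P ** T"
    by (simp add: B_def TA herm_P)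
  have AB: "A ** B = P"
    by (metis AP B P_def matrix_mul_assoc)
  have "B ** A = cadj T ** (P ** A)"
    by (simp add: B_def P_def matrix_mul_assoc)
  then have BA: "B ** A = P"
    using PA TA herm_P by simp
  have "A ** B ** A = A"
    using PA herm_P by (simp add: AB)
  moreover have "B ** A ** B = B"
    unfolding BA using PP herm_P by (simp add: B matrix_mul_assoc)
  ultimately show ?thesis
    using herm_P by (simp add: is_mp_inverse_def AB BA flip: B_def)
qed

lemma is_mp_inverse_mp_inv:
  assumes "cadj A = A"
  shows "is_mp_inverse A (mp_inv A)"
proof -
  obtain T where "A ** A ** T = A"
    using hermitian_square_factor[OF assms] .
  then show ?thesis
    using assms is_mp_inverse_of_square_factor mp_inv_eqI by metis
qed

lemma cadj_mp_inv:
  assumes "cadj A = A"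
  shows "cadj (mp_inv A) = mp_inv A"
proof -
  obtain T where "A ** A ** T = A"
    using hermitian_square_factor[OF assms] .
  then have "mp_inv A = cadj T ** A ** T"
    using assms is_mp_inverse_of_square_factor mp_inv_eqI by blast
  then show ?thesis
    by (simp add: cadj_mult assms matrix_mul_assoc)
qed

lemma mp_inv_commute:
  assumes "cadj A = A"
  shows "A ** mp_inv A = mp_inv A ** A"
  using is_mp_inverse_mp_inv[OF assms] cadj_mp_inv[OF assms] assms
  by (metis cadj_mult is_mp_inverse_def)

lemma kernel_subset_imp_mp_inv_absorb:
  assumes herm: "cadj A = A" and ker: "ker A \<subseteq> ker (cadj B)"
  shows "A ** mp_inv A ** B = B"
proof -
  define Q where "Q = mat 1 - mp_inv A ** A"
  have mp: "is_mp_inverse A (mp_inv A)"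
    by (rule is_mp_inverse_mp_inv[OF herm])
  have "A ** Q = 0"
    using mp by (simp add: Q_def matrix_diff_ldistrib matrix_mul_assoc is_mp_inverse_def)
  have "cadj B ** Q = 0"
  proof (rule matrix_eq_columns)
    fix j
    have "A *v (Q *v axis j 1) = 0"
      using \<open>A ** Q = 0\<close> by (simp add: matrix_vector_mul_assoc)
    then show "(cadj B ** Q) *v axis j 1 = 0 *v axis j 1"
      using ker by (auto simp: ker_def simp flip: matrix_vector_mul_assoc)
  qed
  moreover have "cadj Q = Q"
    using mp by (simp add: Q_def cadj_diff is_mp_inverse_def)
  ultimately have "Q ** B = 0"
    by (metis cadj_eq_0_iff cadj_mult cadj_cadj)
  then show ?thesis
    using mp_inv_commute[OF herm] by (simp add: Q_def matrix_diff_rdistrib)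
qed

lemma norm_cadj_mult_le_trace_mp_inv:
  assumes A: "psd A" and ker: "ker A \<subseteq> ker (cadj B)"
  shows "(norm (cadj B *v v))\<^sup>2 \<le> Re (cinner v (A *v v)) * Re (trace (cadj B ** mp_inv A ** B))"
proof -
  define b where "b j = B *v axis j 1" for j
  have herm: "cadj A = A" "cadj (mp_inv A) = mp_inv A"
    using psd_hermitian[OF A] cadj_mp_inv by auto
  have "(cmod (cinner v (b j)))\<^sup>2 \<le> Re (cinner v (A *v v)) * Re (cinner (b j) (mp_inv A *v b j))" for j
  proof -
    define y where "y = mp_inv A *v b j"
    have "A *v y = b j"
      using kernel_subset_imp_mp_inv_absorb[OF herm(1) ker]
      by (simp add: y_def b_def matrix_vector_mul_assoc matrix_mul_assoc)
    moreover have "cinner y (b j) = cinner (b j) y"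
      using herm(2) by (metis cinner_cadj_left y_def)
    ultimately show ?thesis
      using psd_cauchy_schwarz[OF A, of v y] by (simp add: y_def)
  qed
  then have "(\<Sum>j\<in>UNIV. (cmod (cinner v (b j)))\<^sup>2)
      \<le> (\<Sum>j\<in>UNIV. Re (cinner v (A *v v)) * Re (cinner (b j) (mp_inv A *v b j)))"
    by (rule sum_mono)
  moreover have "(cadj B *v v) $ j = cnj (cinner v (b j))" for j
    by (metis b_def cinner_axis_left cinner_cadj_right cnj_cinner)
  ultimately show ?thesis
    by (simp add: power2_norm_vec trace_sandwich Re_sum sum_distrib_left flip: b_def)
qed

section \<open>Regularization along the kernel\<close>

(* For Hermitian X this is the orthogonal projection onto ker X. *)
definition ker_proj :: "complex^'n^'n \<Rightarrow> complex^'n^'n" where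
  "ker_proj X = mat 1 - X ** mp_inv X"

definition regularize :: "complex^'n^'n \<Rightarrow> real \<Rightarrow> complex^'n^'n" where
  "regularize X e = X + e *\<^sub>R ker_proj X"

lemma ker_proj_equations:
  assumes "cadj X = X"
  shows "cadj (ker_proj X) = ker_proj X" "X ** ker_proj X = 0" "ker_proj X ** X = 0"
    "mp_inv X ** ker_proj X = 0" "ker_proj X ** mp_inv X = 0" "ker_proj X ** ker_proj X = ker_proj X"
proof -
  have mp: "X ** mp_inv X ** X = X" "mp_inv X ** X ** mp_inv X = mp_inv X"
    "cadj (X ** mp_inv X) = X ** mp_inv X"
    using is_mp_inverse_mp_inv[OF assms] by (auto simp: is_mp_inverse_def)
  have comm: "X ** mp_inv X = mp_inv X ** X"
    by (rule mp_inv_commute[OF assms])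
  show "cadj (ker_proj X) = ker_proj X"
    using mp by (simp add: ker_proj_def cadj_diff)
  show XP: "X ** ker_proj X = 0"
    using mp by (simp add: ker_proj_def matrix_diff_ldistrib comm matrix_mul_assoc)
  show "ker_proj X ** X = 0"
    using mp by (simp add: ker_proj_def matrix_diff_rdistrib)
  show XpP: "mp_inv X ** ker_proj X = 0"
    using mp by (simp add: ker_proj_def matrix_diff_ldistrib matrix_mul_assoc)
  show "ker_proj X ** mp_inv X = 0"
    using mp by (simp add: ker_proj_def matrix_diff_rdistrib comm flip: matrix_mul_assoc)
  have "ker_proj X ** ker_proj X = ker_proj X - X ** (mp_inv X ** ker_proj X)"
    by (simp add: ker_proj_def[of X] matrix_diff_rdistrib matrix_mul_assoc)
  then show "ker_proj X ** ker_proj X = ker_proj X"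
    by (simp add: XpP)
qed

lemma ker_proj_mult_eq_0:
  assumes "cadj X = X" "ker X \<subseteq> ker (cadj K)"
  shows "ker_proj X ** K = 0"
  using kernel_subset_imp_mp_inv_absorb[OF assms] by (simp add: ker_proj_def matrix_diff_rdistrib)

lemma psd_ker_proj:
  assumes "cadj X = X"
  shows "psd (ker_proj X)"
proof (rule psdI)
  fix x
  have "cinner x (ker_proj X *v x) = cinner (ker_proj X *v x) (ker_proj X *v x)"
    using ker_proj_equations[OF assms]
    by (metis cinner_cadj_left matrix_vector_mul_assoc)
  then show "0 \<le> cinner x (ker_proj X *v x)"
    by (simp add: cinner_self less_eq_complex_def)
qed

lemma psd_regularize: "psd X \<Longrightarrow> 0 \<le> e \<Longrightarrow> psd (regularize X e)"
  by (simp add: regularize_def psd_add psd_scaleR psd_ker_proj psd_hermitian)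

lemma regularize_inverse:
  assumes herm: "cadj X = X" and "0 < e"
  defines "W \<equiv> mp_inv X + (1 / e) *\<^sub>R ker_proj X"
  shows "regularize X e ** W = mat 1" "W ** regularize X e = mat 1"
  using ker_proj_equations[OF herm] \<open>0 < e\<close> mp_inv_commute[OF herm]
  by (simp_all add: W_def regularize_def matrix_add_ldistrib matrix_add_rdistrib matrix_scalar_ac
      flip: scalar_matrix_assoc) (simp_all add: ker_proj_def)

lemma mp_inv_regularize:
  "cadj X = X \<Longrightarrow> 0 < e \<Longrightarrow> mp_inv (regularize X e) = mp_inv X + (1 / e) *\<^sub>R ker_proj X"
  by (intro mp_inv_eqI is_mp_inverse_of_inverse regularize_inverse)

lemma ker_regularize:
  assumes "cadj X = X" "0 < e"
  shows "ker (regularize X e) = {0}"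
  using regularize_inverse[OF assms]
  by (auto simp: ker_def)
    (metis matrix_vector_mul_assoc matrix_vector_mul_lid matrix_vector_mult_0_right)

lemma sandwich_mp_inv_regularize:
  assumes "cadj X = X" "0 < e" "ker X \<subseteq> ker (cadj K)"
  shows "cadj K ** mp_inv (regularize X e) ** K = cadj K ** mp_inv X ** K"
proof -
  have "ker_proj X ** K = 0"
    using ker_proj_mult_eq_0 assms by blast
  then show ?thesis
    using assms
    by (simp add: mp_inv_regularize matrix_add_ldistrib matrix_add_rdistrib matrix_scalar_ac
        flip: matrix_mul_assoc scalar_matrix_assoc)
qed

section \<open>Hilbert--Schmidt adjoints of positive maps\<close>

locale hs_adjoint =
  fixes \<phi> :: "complex^'n^'n \<Rightarrow> complex^'m^'m"
    and \<phi>s :: "complex^'m^'m \<Rightarrow> complex^'n^'n"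
  assumes adjoint: "\<And>A B. trace (cadj A ** \<phi> B) = trace (cadj (\<phi>s A) ** B)"
begin

lemma adjoint_add: "\<phi>s (A + B) = \<phi>s A + \<phi>s B"
  by (rule trace_cadj_mult_cancel)
    (simp add: cadj_add matrix_add_rdistrib trace_add flip: adjoint)

lemma adjoint_scaleR: "\<phi>s (r *\<^sub>R A) = r *\<^sub>R \<phi>s A"
  by (rule trace_cadj_mult_cancel)
    (simp add: cadj_scaleR trace_scaleR flip: scalar_matrix_assoc adjoint)

lemma adjoint_cscale: "\<phi>s (cscale c A) = cscale c (\<phi>s A)"
  by (rule trace_cadj_mult_cancel)
    (simp add: cadj_cscale cscale_matrix_mult trace_cscale flip: adjoint)

end

locale positive_hs_adjoint = hs_adjoint +
  assumes positive: "positive_map \<phi>"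
begin

lemma psd_adjoint:
  assumes "psd Y"
  shows "psd (\<phi>s Y)"
proof (rule psdI)
  fix w
  have "cnj (cinner w (\<phi>s Y *v w)) = trace (cadj (\<phi>s Y) ** outer w w)"
    by (simp add: trace_mult_outer cinner_cadj_right cnj_cinner)
  also have "\<dots> = trace (Y ** \<phi> (outer w w))"
    using psd_hermitian[OF assms] by (simp flip: adjoint)
  also have "0 \<le> \<dots>"
    using assms positive psd_outer unfolding positive_map_def by (blast intro: trace_mult_psd_nonneg)
  finally show "0 \<le> cinner w (\<phi>s Y *v w)"
    by (simp add: less_eq_complex_def)
qed

lemma adjoint_outer_kernel:
  assumes Z: "psd Z" and Zi: "Z ** Zi = mat 1" and w: "\<phi>s Z *v w = 0"
  shows "\<phi>s (outer y y) *v w = 0"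
proof -
  define u where "u = Zi *v y"
  have Zu: "Z *v u = y"
    by (simp add: u_def matrix_vector_mul_assoc Zi)
  define c where "c = 1 / (1 + Re (cinner u (Z *v u)))"
  have "0 \<le> Re (cinner u (Z *v u))"
    using psd_form_nonneg[OF Z] by (simp add: less_eq_complex_def)
  then have "0 < c" "c * Re (cinner u (Z *v u)) \<le> 1"
    by (simp_all add: c_def field_simps)
  then have "psd (Z - c *\<^sub>R outer y y)"
    using psd_diff_outer[OF Z] Zu by force
  have "(\<phi>s (c *\<^sub>R outer y y) + \<phi>s (Z - c *\<^sub>R outer y y)) *v w = 0"
    using w by (simp flip: adjoint_add)
  then have "\<phi>s (c *\<^sub>R outer y y) *v w = 0"
    using psd_add_kernel psd_adjoint psd_scaleR psd_outer \<open>0 < c\<close>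
      \<open>psd (Z - c *\<^sub>R outer y y)\<close>
    by (metis less_eq_real_def)
  then show ?thesis
    using \<open>0 < c\<close> by (simp add: adjoint_scaleR scaleR_matrix_vector_mult)
qed

lemma adjoint_kernel_of_invertible:
  assumes "psd Z" "Z ** Zi = mat 1" "\<phi>s Z *v w = 0"
  shows "cadj (\<phi>s M) *v w = 0"
proof -
  have "M \<in> {M. cadj (\<phi>s M) *v w = 0}"
  proof (rule outer_squares_generate)
    show "outer y y \<in> {M. cadj (\<phi>s M) *v w = 0}" for y
      using adjoint_outer_kernel[OF assms] psd_hermitian[OF psd_adjoint[OF psd_outer]] by simp
  qed (simp_all add: adjoint_add adjoint_cscale cadj_add cadj_cscale matrix_vector_mult_add_rdistrib
      cscale_matrix_vector_mult)
  then show ?thesis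
    by simp
qed

lemma kernel_inclusion_of_bounded_trace:
  assumes X: "psd X" and v: "\<phi>s X *v v = 0"
    and bound: "\<And>e. 0 < e \<Longrightarrow>
      Re (trace (cadj (\<phi>s K) ** mp_inv (\<phi>s (regularize X e)) ** \<phi>s K)) \<le> L"
  shows "cadj (\<phi>s K) *v v = 0"
proof -
  define c where "c = Re (cinner v (\<phi>s (ker_proj X) *v v))"
  have "(norm (cadj (\<phi>s K) *v v))\<^sup>2 \<le> e * (c * L)" if "0 < e" for e
  proof -
    define A where "A = \<phi>s (regularize X e)"
    have herm: "cadj X = X"
      using X by (rule psd_hermitian)
    have "psd A"
      using psd_adjoint[OF psd_regularize[OF X]] \<open>0 < e\<close> by (simp add: A_def)
    moreover have "ker A \<subseteq> ker (cadj (\<phi>s K))"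
      using adjoint_kernel_of_invertible[OF psd_regularize[OF X]
          regularize_inverse(1)[OF herm \<open>0 < e\<close>]] \<open>0 < e\<close>
      by (auto simp: ker_def A_def)
    ultimately have "(norm (cadj (\<phi>s K) *v v))\<^sup>2
        \<le> Re (cinner v (A *v v)) * Re (trace (cadj (\<phi>s K) ** mp_inv A ** \<phi>s K))"
      by (rule norm_cadj_mult_le_trace_mp_inv)
    also have "Re (cinner v (A *v v)) = e * c"
      by (simp add: A_def regularize_def adjoint_add adjoint_scaleR matrix_vector_mult_add_rdistrib
          scaleR_matrix_vector_mult v cinner_scaleR_right c_def)
    also have "e * c * Re (trace (cadj (\<phi>s K) ** mp_inv A ** \<phi>s K)) \<le> e * c * L"
      using bound[OF \<open>0 < e\<close>] \<open>0 < e\<close>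
        psd_form_nonneg[OF psd_adjoint[OF psd_ker_proj[OF herm]], of v]
      by (intro mult_left_mono) (auto simp: A_def c_def less_eq_complex_def)
    finally show ?thesis
      by simp
  qed
  then have "(norm (cadj (\<phi>s K) *v v))\<^sup>2 \<le> 0"
    by (rule nonpos_if_le_all_pos_mult)
  then show ?thesis
    by simp
qed

end

theorem lemma2p3:
  fixes \<phi> :: "complex^'n^'n \<Rightarrow> complex^'m^'m"
    and \<phi>s :: "complex^'m^'m \<Rightarrow> complex^'n^'n"
  assumes lin: "clinear_map \<phi>"
    and pos: "positive_map \<phi>"
    and adj: "\<forall>A B. trace (cadj A ** \<phi> B) = trace (cadj (\<phi>s A) ** B)"
    and hyp: "(\<forall>K X. psd X \<and> ker X \<subseteq> ker (cadj K) \<longrightarrow>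
                 trace (\<phi>s (cadj K ** mp_inv X ** K))
                   \<ge> trace (cadj (\<phi>s K) ** mp_inv (\<phi>s X) ** \<phi>s K))
            \<or> (\<forall>K X. psd X \<and> ker X \<subseteq> ker (cadj K) \<longrightarrow>
                 trace (cadj K ** mp_inv X ** K)
                   \<ge> trace (cadj (\<phi>s K) ** mp_inv (\<phi>s X) ** \<phi>s K))"
  shows "\<forall>K X::complex^'m^'m. psd X \<and> ker X \<subseteq> ker (cadj K) \<longrightarrow>
           ker (\<phi>s X) \<subseteq> ker (cadj (\<phi>s K))"
proof (intro allI impI subsetI)
  interpret positive_hs_adjoint \<phi> \<phi>s
    using adj pos by unfold_locales auto
  fix K X :: "complex^'m^'m" and v
  assume "psd X \<and> ker X \<subseteq> ker (cadj K)" and "v \<in> ker (\<phi>s X)"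
  then have X: "psd X" and kX: "ker X \<subseteq> ker (cadj K)" and v: "\<phi>s X *v v = 0"
    by (auto simp: ker_def)
  have reg: "psd (regularize X e) \<and> ker (regularize X e) \<subseteq> ker (cadj K)"
    "cadj K ** mp_inv (regularize X e) ** K = cadj K ** mp_inv X ** K" if "0 < e" for e
    using psd_regularize[OF X, of e] ker_regularize[OF psd_hermitian[OF X] that]
      sandwich_mp_inv_regularize[OF psd_hermitian[OF X] that kX] that
    by (auto simp: ker_def)
  obtain T where
    "\<And>e. 0 < e \<Longrightarrow> trace (cadj (\<phi>s K) ** mp_inv (\<phi>s (regularize X e)) ** \<phi>s K) \<le> T"
    using hyp reg by (elim disjE) (metis, metis)
  then have "cadj (\<phi>s K) *v v = 0"
    by (intro kernel_inclusion_of_bounded_trace[OF X v]) (auto simp: less_eq_complex_def)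
  then show "v \<in> ker (cadj (\<phi>s K))"
    by (simp add: ker_def)
qed

end
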